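(* Let $G$ be a finite simple robust graph and let $v \in V(G)$ with $d(v) \leq 6$. If $\Delta(\overline{G[N(v)]}) > 1$, then $\{v\}$ is reducible in $G$. Also, if $\overline{G[N(v)]}$ has exactly $2$ edges, then $\{v\}$ is reducible in $G$.
   Context: $\overline{H}$ is the complement of $H$. $G$ is robust if for every $u\in V(G)$, every component of $G[N(u)]$ has at least $5$ vertices. For a set $\mathcal{S}$ of triangles, an $\mathcal{S}$-edge is an edge of a triangle in $\mathcal{S}$. A nonempty set $V_0 \subseteq V(G)$ is reducible if there exist a set $\mathcal{S}$ of pairwise edge-disjoint triangles of $G$ and a set $X \subseteq E(G)$ such that (i) $|X| \leq 2|\mathcal{S}|$; (ii) $G - X$ has no triangle containing a vertex of $V_0$; (iii) $X$ contains every $\mathcal{S}$-edge whose endpoints both lie outside $V_0$. *)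

theory Defs
  imports Main
begin

definition simple_graph :: "'a set \<Rightarrow> 'a set set \<Rightarrow> bool" where
  "simple_graph V E \<longleftrightarrow> finite V \<and>
     (\<forall>e\<in>E. \<exists>a b. e = {a, b} \<and> a \<noteq> b \<and> a \<in> V \<and> b \<in> V)"

definition nbhd :: "'a set set \<Rightarrow> 'a \<Rightarrow> 'a set" where
  "nbhd E u = {w. {u, w} \<in> E}"

definition degree :: "'a set set \<Rightarrow> 'a \<Rightarrow> nat" where
  "degree E u = card (nbhd E u)"

definition adj_in :: "'a set set \<Rightarrow> 'a set \<Rightarrow> 'a \<Rightarrow> 'a \<Rightarrow> bool" where
  "adj_in E W a b \<longleftrightarrow> a \<in> W \<and> b \<in> W \<and> {a, b} \<in> E"

definition component_in :: "'a set set \<Rightarrow> 'a set \<Rightarrow> 'a \<Rightarrow> 'a set" where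
  "component_in E W x = {y. (adj_in E W)\<^sup>*\<^sup>* x y}"

definition robust :: "'a set \<Rightarrow> 'a set set \<Rightarrow> bool" where
  "robust V E \<longleftrightarrow> (\<forall>u\<in>V. \<forall>x\<in>nbhd E u. card (component_in E (nbhd E u) x) \<ge> 5)"

definition compl_edges :: "'a set set \<Rightarrow> 'a set \<Rightarrow> 'a set set" where
  "compl_edges E W = {{x, y} | x y. x \<in> W \<and> y \<in> W \<and> x \<noteq> y \<and> {x, y} \<notin> E}"

definition max_degree :: "'a set \<Rightarrow> 'a set set \<Rightarrow> nat" where
  "max_degree W F = (if W = {} then 0 else Max ((\<lambda>x. card (nbhd F x \<inter> W)) ` W))"

definition triangle :: "'a set set \<Rightarrow> 'a set \<Rightarrow> bool" where
  "triangle E T \<longleftrightarrow> (\<exists>a b c. T = {a, b, c} \<and> a \<noteq> b \<and> b \<noteq> c \<and> a \<noteq> c \<and>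
      {a, b} \<in> E \<and> {b, c} \<in> E \<and> {a, c} \<in> E)"

definition tri_edges :: "'a set \<Rightarrow> 'a set set" where
  "tri_edges T = {e. e \<subseteq> T \<and> card e = 2}"

definition edge_disjoint :: "'a set set \<Rightarrow> bool" where
  "edge_disjoint S \<longleftrightarrow> (\<forall>T\<in>S. \<forall>T'\<in>S. T \<noteq> T' \<longrightarrow> tri_edges T \<inter> tri_edges T' = {})"

definition reducible :: "'a set \<Rightarrow> 'a set set \<Rightarrow> 'a set \<Rightarrow> bool" where
  "reducible V E V0 \<longleftrightarrow> V0 \<noteq> {} \<and> V0 \<subseteq> V \<and>
     (\<exists>S X. (\<forall>T\<in>S. triangle E T) \<and> edge_disjoint S \<and> X \<subseteq> E \<and>
        card X \<le> 2 * card S \<and>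
        (\<forall>T. triangle (E - X) T \<longrightarrow> T \<inter> V0 = {}) \<and>
        (\<forall>T\<in>S. \<forall>e\<in>tri_edges T. e \<inter> V0 = {} \<longrightarrow> e \<in> X))"

end

theory Submission
  imports Defs
begin

(*
  Let H be the graph induced on N = N(v). Suppose M is a matching of H, T a set of edge-disjoint
  triangles of H containing no edge of M, and C a set of vertices with |T| + |C| <= |M|, such that
  every edge of H lies in M, lies in a triangle of T, or meets C. Then the triangles v + e for e in
  M together with T, and the edges of M, of the triangles in T and vc for c in C, show that {v} is
  reducible, because |M| + 3|T| + |C| <= 2(|M| + |T|).

  Robustness gives |N| >= 5 and leaves H without isolated vertices. If some vertex of H has two
  non-neighbours, let x be a vertex of minimum degree d <= |N| - 3 <= 3. For d = 1 the edge from x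
  to its neighbour a goes into M and a into C, leaving at most four vertices; for d = 2 and d = 3
  a short case analysis on the neighbours of x produces M and C, with T empty. If instead the
  complement of H consists of two disjoint edges ab and cd, take the triangles ace and bde and the
  matching bc, ad (plus ef and C = {f} when |N| = 6).
*)

lemma card_2_containing:
  assumes "card e = 2" "y \<in> e"
  obtains z where "z \<noteq> y" "e = {y, z}"
proof -
  obtain p q where "e = {p, q}" "p \<noteq> q" using assms(1) by (meson card_2_iff)
  then show thesis using assms(2) that[of p] that[of q] by (auto simp: insert_commute)
qed

lemma tri_edges_3:
  assumes "a \<noteq> b" "b \<noteq> c" "a \<noteq> c"
  shows "tri_edges {a, b, c} = {{a, b}, {a, c}, {b, c}}"
proof
  show "tri_edges {a, b, c} \<subseteq> {{a, b}, {a, c}, {b, c}}"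
  proof
    fix e assume "e \<in> tri_edges {a, b, c}"
    then obtain p q where "e = {p, q}" "p \<noteq> q" "{p, q} \<subseteq> {a, b, c}"
      by (auto simp: tri_edges_def card_2_iff)
    then show "e \<in> {{a, b}, {a, c}, {b, c}}" by (auto simp: insert_commute)
  qed
  show "{{a, b}, {a, c}, {b, c}} \<subseteq> tri_edges {a, b, c}"
    using assms by (auto simp: tri_edges_def)
qed

lemma tri_edges_disjointI:
  assumes "finite t" "card (t \<inter> t') \<le> 1"
  shows "tri_edges t \<inter> tri_edges t' = {}"
proof (rule ccontr)
  assume "tri_edges t \<inter> tri_edges t' \<noteq> {}"
  then obtain e where "e \<subseteq> t \<inter> t'" "card e = 2" by (auto simp: tri_edges_def)
  then have "2 \<le> card (t \<inter> t')" using assms(1) by (metis card_mono finite_Int)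
  with assms(2) show False by simp
qed

lemma triangleI:
  assumes "a \<noteq> b" "b \<noteq> c" "a \<noteq> c" "{a, b} \<in> E" "{b, c} \<in> E" "{a, c} \<in> E"
  shows "triangle E {a, b, c}"
  using assms unfolding triangle_def by blast

lemma triangle_through:
  assumes "triangle E t" "v \<in> t"
  obtains p q where "t = {v, p, q}" "v \<noteq> p" "v \<noteq> q" "p \<noteq> q"
    "{v, p} \<in> E" "{v, q} \<in> E" "{p, q} \<in> E"
proof -
  obtain a b c where abc: "t = {a, b, c}" "a \<noteq> b" "b \<noteq> c" "a \<noteq> c"
    "{a, b} \<in> E" "{b, c} \<in> E" "{a, c} \<in> E"
    using assms(1) unfolding triangle_def by blast
  from assms(2) abc(1) consider "v = a" | "v = b" | "v = c" by blast
  then show thesis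
  proof cases
    case 1 then show ?thesis using that[of b c] abc by auto
  next
    case 2 then show ?thesis using that[of a c] abc by (auto simp: insert_commute)
  next
    case 3 then show ?thesis using that[of a b] abc by (auto simp: insert_commute)
  qed
qed

lemma triangle_tri_edges:
  assumes "triangle E t"
  shows "finite t" "finite (tri_edges t)" "tri_edges t \<subseteq> E" "card (tri_edges t) \<le> 3"
proof -
  obtain a b c where "t = {a, b, c}" "a \<noteq> b" "b \<noteq> c" "a \<noteq> c"
    "{a, b} \<in> E" "{b, c} \<in> E" "{a, c} \<in> E"
    using assms unfolding triangle_def by blast
  then show "finite t" "finite (tri_edges t)" "tri_edges t \<subseteq> E" "card (tri_edges t) \<le> 3"
    by (simp_all add: tri_edges_3 card_insert_le_m1)
qed

lemma simple_graph_no_loop: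
  assumes "simple_graph V E"
  shows "{w} \<notin> E"
  using assms unfolding simple_graph_def by (metis doubleton_eq_iff insert_absorb2)

lemma not_in_nbhd:
  assumes "simple_graph V E"
  shows "v \<notin> nbhd E v"
  using simple_graph_no_loop[OF assms] unfolding nbhd_def by simp

lemma finite_nbhd:
  assumes "simple_graph V E"
  shows "finite (nbhd E v)"
proof -
  have "nbhd E v \<subseteq> V"
    using assms unfolding simple_graph_def nbhd_def by (auto simp: doubleton_eq_iff)
  then show ?thesis using assms unfolding simple_graph_def by (metis finite_subset)
qed

lemma triangle_cone:
  assumes "p \<in> nbhd E v" "q \<in> nbhd E v" "p \<noteq> q" "{p, q} \<in> E" "v \<notin> nbhd E v"
  shows "triangle E {v, p, q}" "tri_edges {v, p, q} = {{v, p}, {v, q}, {p, q}}"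
proof -
  have "v \<noteq> p" "v \<noteq> q" "{v, p} \<in> E" "{v, q} \<in> E" using assms unfolding nbhd_def by auto
  then show "triangle E {v, p, q}" "tri_edges {v, p, q} = {{v, p}, {v, q}, {p, q}}"
    using assms(3,4) by (auto intro: triangleI simp: tri_edges_3)
qed

section \<open>Certificates of reducibility\<close>

definition matching_in :: "'a set set \<Rightarrow> 'a set \<Rightarrow> 'a set set \<Rightarrow> bool" where
  "matching_in E W M \<longleftrightarrow> M \<subseteq> E \<and> (\<forall>e\<in>M. card e = 2 \<and> e \<subseteq> W) \<and> pairwise disjnt M"

lemma edge_disjoint_cones_and_triangles:
  assumes "pairwise disjnt M" "\<forall>e\<in>M. card e = 2 \<and> v \<notin> e"
    and "\<forall>t\<in>T. finite t \<and> v \<notin> t" "edge_disjoint T" "\<forall>e\<in>M. \<forall>t\<in>T. \<not> e \<subseteq> t"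
  shows "edge_disjoint (insert v ` M \<union> T)"
proof -
  have finite_cone: "finite (insert v e)" if "e \<in> M" for e
    using assms(2) that by (auto intro: card_ge_0_finite)
  have cone_triangle: "tri_edges (insert v e) \<inter> tri_edges t = {}" if "e \<in> M" "t \<in> T" for e t
  proof (rule tri_edges_disjointI)
    have "\<not> e \<subseteq> t" "card e = 2" using assms(2,5) that by auto
    then have "e \<inter> t \<subset> e" "card e = 2" by blast+
    then have "card (e \<inter> t) < 2" by (metis card.infinite psubset_card_mono zero_neq_numeral)
    moreover have "insert v e \<inter> t = e \<inter> t" using assms(3) that by auto
    ultimately show "card (insert v e \<inter> t) \<le> 1" by simp
  qed (use finite_cone that in simp)
  have cone_cone: "tri_edges (insert v e) \<inter> tri_edges (insert v e') = {}"
    if "e \<in> M" "e' \<in> M" "e \<noteq> e'" for e e'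
  proof (rule tri_edges_disjointI)
    have "e \<inter> e' = {}" using assms(1) that by (auto simp: pairwise_def disjnt_def)
    then show "card (insert v e \<inter> insert v e') \<le> 1" by (simp add: insert_commute)
  qed (use finite_cone that in simp)
  show ?thesis
    unfolding edge_disjoint_def
  proof (intro ballI impI)
    fix t t' assume t: "t \<in> insert v ` M \<union> T" and t': "t' \<in> insert v ` M \<union> T" and "t \<noteq> t'"
    show "tri_edges t \<inter> tri_edges t' = {}"
    proof (cases "t \<in> T"; cases "t' \<in> T")
      assume "t \<in> T" "t' \<in> T"
      then show ?thesis using assms(4) \<open>t \<noteq> t'\<close> by (simp add: edge_disjoint_def)
    next
      assume "t \<in> T" "t' \<notin> T"
      then show ?thesis using t' cone_triangle by blast
    next
      assume "t \<notin> T" "t' \<in> T"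
      then show ?thesis using t cone_triangle by blast
    next
      assume "t \<notin> T" "t' \<notin> T"
      then show ?thesis using t t' \<open>t \<noteq> t'\<close> cone_cone by blast
    qed
  qed
qed

lemma card_cones_and_triangles:
  assumes "finite M" "finite T" "\<forall>e\<in>M. v \<notin> e" "\<forall>t\<in>T. v \<notin> t"
  shows "card (insert v ` M \<union> T) = card M + card T"
proof -
  have "inj_on (insert v) M"
    using assms(3) by (metis inj_onI insert_ident)
  moreover have "insert v ` M \<inter> T = {}" using assms(4) by auto
  ultimately show ?thesis by (simp add: card_Un_disjoint card_image assms(1,2))
qed

lemma card_hitting_set:
  assumes "finite M" "finite T" "finite C" "\<forall>t\<in>T. triangle E t"
  shows "card (M \<union> \<Union> (tri_edges ` T) \<union> (\<lambda>c. {v, c}) ` C) \<le> card M + 3 * card T + card C"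
proof -
  have "card (\<Union> (tri_edges ` T)) \<le> (\<Sum>t\<in>T. card (tri_edges t))"
    using assms(2) by (rule card_UN_le)
  also have "\<dots> \<le> of_nat (card T) * 3"
    using assms(4) triangle_tri_edges(4) by (blast intro: sum_bounded_above)
  finally have "card (\<Union> (tri_edges ` T)) \<le> card T * 3" by simp
  moreover have "card ((\<lambda>c. {v, c}) ` C) \<le> card C" using assms(3) by (rule card_image_le)
  moreover have "finite (\<Union> (tri_edges ` T))"
    using assms(2,4) triangle_tri_edges(2) by blast
  ultimately show ?thesis
    using assms(1,3) card_Un_le[of "M \<union> \<Union> (tri_edges ` T)" "(\<lambda>c. {v, c}) ` C"]
      card_Un_le[of M "\<Union> (tri_edges ` T)"] by linarith
qed

lemma not_in_triangle_if_hit: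
  assumes "triangle (E - X) t"
    and hit: "\<forall>p\<in>nbhd E v. \<forall>q\<in>nbhd E v. p \<noteq> q \<longrightarrow> {p, q} \<in> E \<longrightarrow>
               {p, q} \<in> X \<or> {v, p} \<in> X \<or> {v, q} \<in> X"
  shows "v \<notin> t"
proof
  assume "v \<in> t"
  with assms(1) obtain p q where "p \<noteq> q" "{v, p} \<in> E - X" "{v, q} \<in> E - X" "{p, q} \<in> E - X"
    by (rule triangle_through)
  moreover have "p \<in> nbhd E v" "q \<in> nbhd E v" using calculation unfolding nbhd_def by auto
  ultimately show False using hit by blast
qed

lemma cones_over_matching:
  assumes "simple_graph V E" "matching_in E (nbhd E v) M" "e \<in> M"
  shows "triangle E (insert v e)" "f \<in> tri_edges (insert v e) \<Longrightarrow> v \<notin> f \<Longrightarrow> f = e"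
proof -
  obtain p q where "e = {p, q}" "p \<noteq> q" "p \<in> nbhd E v" "q \<in> nbhd E v" "e \<in> E"
    using assms(2,3) unfolding matching_in_def by (metis card_2_iff insert_subset subsetD)
  then show "triangle E (insert v e)" "f \<in> tri_edges (insert v e) \<Longrightarrow> v \<notin> f \<Longrightarrow> f = e"
    using triangle_cone[of p E v q] not_in_nbhd[OF assms(1)] by auto
qed

lemma reducible_if_cover:
  assumes sg: "simple_graph V E" and "v \<in> V"
    and M: "matching_in E (nbhd E v) M"
    and T: "\<forall>t\<in>T. triangle E t \<and> t \<subseteq> nbhd E v" "edge_disjoint T"
    and MT: "\<forall>e\<in>M. \<forall>t\<in>T. \<not> e \<subseteq> t"
    and C: "C \<subseteq> nbhd E v" "card T + card C \<le> card M"
    and cover: "\<forall>p\<in>nbhd E v. \<forall>q\<in>nbhd E v. p \<noteq> q \<longrightarrow> {p, q} \<in> E \<longrightarrow>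
                  {p, q} \<in> M \<or> (\<exists>t\<in>T. {p, q} \<subseteq> t) \<or> p \<in> C \<or> q \<in> C"
  shows "reducible V E {v}"
proof -
  define N where "N = nbhd E v"
  have "v \<notin> N" using not_in_nbhd[OF sg] unfolding N_def .
  have "M \<subseteq> Pow N" "T \<subseteq> Pow N" "C \<subseteq> N" using M T C unfolding matching_in_def N_def by auto
  then have fin: "finite M" "finite T" "finite C"
    using finite_nbhd[OF sg] unfolding N_def by (auto intro: finite_subset)
  have "\<forall>e\<in>M. v \<notin> e" "\<forall>t\<in>T. v \<notin> t"
    using \<open>M \<subseteq> Pow N\<close> \<open>T \<subseteq> Pow N\<close> \<open>v \<notin> N\<close> by blast+
  define S where "S = insert v ` M \<union> T"
  define X where "X = M \<union> \<Union> (tri_edges ` T) \<union> (\<lambda>c. {v, c}) ` C"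
  have "triangle E t" if "t \<in> S" for t
    using that T cones_over_matching(1)[OF sg M] unfolding S_def by blast
  moreover have "edge_disjoint S"
    unfolding S_def
  proof (rule edge_disjoint_cones_and_triangles)
    show "\<forall>t\<in>T. finite t \<and> v \<notin> t"
      using T \<open>\<forall>t\<in>T. v \<notin> t\<close> triangle_tri_edges(1) by blast
  qed (use M \<open>\<forall>e\<in>M. v \<notin> e\<close> T(2) MT in \<open>auto simp: matching_in_def\<close>)
  moreover have "X \<subseteq> E"
  proof -
    have "M \<subseteq> E" "(\<lambda>c. {v, c}) ` C \<subseteq> E"
      using M C(1) unfolding matching_in_def nbhd_def by auto
    moreover have "\<Union> (tri_edges ` T) \<subseteq> E"
      using T triangle_tri_edges(3) by blast
    ultimately show ?thesis unfolding X_def by blast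
  qed
  moreover have "card X \<le> 2 * card S"
    using card_hitting_set[OF fin, of E v] card_cones_and_triangles[OF fin(1,2)]
      \<open>\<forall>e\<in>M. v \<notin> e\<close> \<open>\<forall>t\<in>T. v \<notin> t\<close> T C(2)
    unfolding X_def S_def by auto
  moreover have "v \<notin> t" if "triangle (E - X) t" for t
  proof (rule not_in_triangle_if_hit[OF that])
    show "\<forall>p\<in>nbhd E v. \<forall>q\<in>nbhd E v. p \<noteq> q \<longrightarrow> {p, q} \<in> E \<longrightarrow>
            {p, q} \<in> X \<or> {v, p} \<in> X \<or> {v, q} \<in> X"
    proof (intro ballI impI)
      fix p q assume "p \<in> nbhd E v" "q \<in> nbhd E v" "p \<noteq> q" "{p, q} \<in> E"
      with cover have "{p, q} \<in> M \<or> (\<exists>t\<in>T. {p, q} \<in> tri_edges t) \<or> p \<in> C \<or> q \<in> C"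
        unfolding tri_edges_def by auto
      then show "{p, q} \<in> X \<or> {v, p} \<in> X \<or> {v, q} \<in> X" unfolding X_def by blast
    qed
  qed
  moreover have "e \<in> X" if "t \<in> S" "e \<in> tri_edges t" "v \<notin> e" for t e
    using that cones_over_matching(2)[OF sg M] unfolding S_def X_def by blast
  ultimately have "\<exists>S X. (\<forall>T\<in>S. triangle E T) \<and> edge_disjoint S \<and> X \<subseteq> E \<and>
        card X \<le> 2 * card S \<and> (\<forall>T. triangle (E - X) T \<longrightarrow> T \<inter> {v} = {}) \<and>
        (\<forall>T\<in>S. \<forall>e\<in>tri_edges T. e \<inter> {v} = {} \<longrightarrow> e \<in> X)"
    by (intro exI[of _ S] exI[of _ X]) auto
  then show ?thesis unfolding reducible_def using \<open>v \<in> V\<close> by simp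
qed

definition matching_cover :: "'a set set \<Rightarrow> 'a set \<Rightarrow> bool" where
  "matching_cover E W \<longleftrightarrow> (\<exists>M C. matching_in E W M \<and> C \<subseteq> W \<and> card C \<le> card M \<and>
     (\<forall>p\<in>W - C. \<forall>q\<in>W - C. p \<noteq> q \<longrightarrow> {p, q} \<in> E \<longrightarrow> {p, q} \<in> M))"

lemma matching_coverI:
  assumes "matching_in E W M" "C \<subseteq> W" "card C \<le> card M"
    "\<forall>p\<in>W - C. \<forall>q\<in>W - C. p \<noteq> q \<longrightarrow> {p, q} \<in> E \<longrightarrow> {p, q} \<in> M"
  shows "matching_cover E W"
  using assms unfolding matching_cover_def by blast

lemma reducible_if_matching_cover:
  assumes "simple_graph V E" "v \<in> V" "matching_cover E (nbhd E v)"
  shows "reducible V E {v}"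
proof -
  obtain M C where "matching_in E (nbhd E v) M" "C \<subseteq> nbhd E v" "card C \<le> card M"
    and cover: "\<forall>p\<in>nbhd E v - C. \<forall>q\<in>nbhd E v - C. p \<noteq> q \<longrightarrow> {p, q} \<in> E \<longrightarrow> {p, q} \<in> M"
    using assms(3) unfolding matching_cover_def by blast
  then show ?thesis
    using assms(1,2) by (intro reducible_if_cover[where T = "{}"]) (auto simp: edge_disjoint_def)
qed

lemma reducible_if_two_triangles_cover:
  assumes sg: "simple_graph V E" and "v \<in> V"
    and abcde: "distinct [a, b, c, d, e]" "{a, b, c, d, e} \<subseteq> nbhd E v"
    and edges: "{a, c} \<in> E" "{c, e} \<in> E" "{a, e} \<in> E" "{b, d} \<in> E" "{d, e} \<in> E" "{b, e} \<in> E"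
    and non_edges: "{a, b} \<notin> E" "{c, d} \<notin> E"
    and M: "matching_in E (nbhd E v) M" "{b, c} \<in> M" "{a, d} \<in> M"
      "\<forall>f\<in>M. \<not> f \<subseteq> {a, c, e} \<and> \<not> f \<subseteq> {b, d, e}"
    and C: "C \<subseteq> nbhd E v" "nbhd E v - C \<subseteq> {a, b, c, d, e}" "2 + card C \<le> card M"
  shows "reducible V E {v}"
proof -
  define T where "T = {{a, c, e}, {b, d, e}}"
  have "triangle E {a, c, e}" "triangle E {b, d, e}"
    using abcde(1) edges by (auto intro!: triangleI)
  moreover have "{a, c, e} \<inter> {b, d, e} = {e}" "{a, c, e} \<noteq> {b, d, e}"
    using abcde(1) by auto
  ultimately have T: "\<forall>t\<in>T. triangle E t \<and> t \<subseteq> nbhd E v" "edge_disjoint T" "card T = 2"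
    using abcde(2) tri_edges_disjointI[of "{a, c, e}" "{b, d, e}"]
      tri_edges_disjointI[of "{b, d, e}" "{a, c, e}"]
    unfolding T_def edge_disjoint_def by (auto simp: Int_commute)
  show ?thesis
  proof (rule reducible_if_cover[OF sg \<open>v \<in> V\<close> M(1) T(1,2) _ C(1)])
    show "\<forall>p\<in>nbhd E v. \<forall>q\<in>nbhd E v. p \<noteq> q \<longrightarrow> {p, q} \<in> E \<longrightarrow>
            {p, q} \<in> M \<or> (\<exists>t\<in>T. {p, q} \<subseteq> t) \<or> p \<in> C \<or> q \<in> C"
    proof (intro ballI impI)
      fix p q assume "p \<in> nbhd E v" "q \<in> nbhd E v" "p \<noteq> q" "{p, q} \<in> E"
      show "{p, q} \<in> M \<or> (\<exists>t\<in>T. {p, q} \<subseteq> t) \<or> p \<in> C \<or> q \<in> C"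
      proof (cases "p \<in> C \<or> q \<in> C")
        case False
        then have "p \<in> {a, b, c, d, e}" "q \<in> {a, b, c, d, e}"
          using C(2) \<open>p \<in> nbhd E v\<close> \<open>q \<in> nbhd E v\<close> by auto
        then show ?thesis
          using M(2,3) non_edges \<open>p \<noteq> q\<close> \<open>{p, q} \<in> E\<close> unfolding T_def
          by (auto simp: insert_commute)
      qed blast
    qed
  qed (use M(4) C(3) T(3) in \<open>auto simp: T_def\<close>)
qed

section \<open>Matching covers of small graphs\<close>

lemma matching_cover_if_no_edges:
  assumes "\<forall>p\<in>W. \<forall>q\<in>W. p \<noteq> q \<longrightarrow> {p, q} \<notin> E"
  shows "matching_cover E W"
  by (rule matching_coverI[of E W "{}" "{}"]) (use assms in \<open>auto simp: matching_in_def\<close>)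

lemma matching_cover_single_edge:
  assumes "p \<in> W" "q \<in> W" "p \<noteq> q" "{p, q} \<in> E" "r \<in> W"
    and "\<forall>u\<in>W - {r}. \<forall>w\<in>W - {r}. u \<noteq> w \<longrightarrow> {u, w} \<in> E \<longrightarrow> {u, w} = {p, q}"
  shows "matching_cover E W"
  by (rule matching_coverI[of E W "{{p, q}}" "{r}"]) (use assms in \<open>auto simp: matching_in_def\<close>)

text \<open>A graph whose edges pairwise intersect is a star or a triangle.\<close>

lemma matching_cover_if_edges_intersect:
  assumes "\<forall>p\<in>W. \<forall>q\<in>W. \<forall>r\<in>W. \<forall>s\<in>W. p \<noteq> q \<longrightarrow> r \<noteq> s \<longrightarrow> {p, q} \<in> E \<longrightarrow> {r, s} \<in> E \<longrightarrow>
             {p, q} \<inter> {r, s} \<noteq> {}"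
  shows "matching_cover E W"
proof (cases "\<exists>p\<in>W. \<exists>q\<in>W. p \<noteq> q \<and> {p, q} \<in> E")
  case False
  then show ?thesis by (intro matching_cover_if_no_edges) blast
next
  case True
  then obtain p q where pq: "p \<in> W" "q \<in> W" "p \<noteq> q" "{p, q} \<in> E" by blast
  have meets_pq: "p \<in> {u, w} \<or> q \<in> {u, w}" if "u \<in> W" "w \<in> W" "u \<noteq> w" "{u, w} \<in> E" for u w
    using assms pq that by blast
  show ?thesis
  proof (cases "\<exists>r\<in>W. p \<noteq> r \<and> q \<noteq> r \<and> {p, r} \<in> E \<and> {q, r} \<in> E")
    case True
    then obtain r where r: "r \<in> W" "p \<noteq> r" "q \<noteq> r" "{p, r} \<in> E" "{q, r} \<in> E" by blast
    have "{u, w} = {p, q}" if "u \<in> W - {r}" "w \<in> W - {r}" "u \<noteq> w" "{u, w} \<in> E" for u w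
      using assms[rule_format, of u w p r] assms[rule_format, of u w q r] meets_pq[of u w] r pq that
      by auto
    then show ?thesis using matching_cover_single_edge[OF pq r(1)] by blast
  next
    case False
    have "(\<forall>u\<in>W. \<forall>w\<in>W. u \<noteq> w \<longrightarrow> {u, w} \<in> E \<longrightarrow> p \<in> {u, w}) \<or>
          (\<forall>u\<in>W. \<forall>w\<in>W. u \<noteq> w \<longrightarrow> {u, w} \<in> E \<longrightarrow> q \<in> {u, w})"
    proof (rule ccontr)
      assume "\<not> ?thesis"
      then obtain u w u' w' where e: "u \<in> W" "w \<in> W" "u \<noteq> w" "{u, w} \<in> E" "p \<notin> {u, w}"
        and e': "u' \<in> W" "w' \<in> W" "u' \<noteq> w'" "{u', w'} \<in> E" "q \<notin> {u', w'}"
        by blast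
      then have "q \<in> {u, w}" "p \<in> {u', w'}" using meets_pq by blast+
      moreover have "card {u, w} = 2" "card {u', w'} = 2" using e(3) e'(3) by simp_all
      ultimately obtain r s where "r \<noteq> q" "{u, w} = {q, r}" "s \<noteq> p" "{u', w'} = {p, s}"
        by (metis card_2_containing)
      moreover have "{u, w} \<subseteq> W" "{u', w'} \<subseteq> W" using e(1,2) e'(1,2) by simp_all
      ultimately have r: "r \<in> W" "p \<noteq> r" "r \<noteq> q" "{q, r} \<in> E"
        and s: "s \<in> W" "s \<noteq> p" "q \<noteq> s" "{p, s} \<in> E"
        using e(4,5) e'(4,5) by simp_all
      have "r = s"
        using assms[rule_format, of q r p s] r s pq by auto
      with False r s show False by (auto simp: insert_commute)
    qed
    then show ?thesis
      using matching_cover_single_edge[OF pq pq(1)] matching_cover_single_edge[OF pq pq(2)] by blast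
  qed
qed

lemma matching_cover_card_le_4:
  assumes "finite W" "card W \<le> 4"
  shows "matching_cover E W"
proof (cases "\<exists>p\<in>W. \<exists>q\<in>W. \<exists>r\<in>W. \<exists>s\<in>W. p \<noteq> q \<and> r \<noteq> s \<and> {p, q} \<in> E \<and> {r, s} \<in> E \<and>
               {p, q} \<inter> {r, s} = {}")
  case True
  then obtain p q r s where pqrs: "p \<in> W" "q \<in> W" "r \<in> W" "s \<in> W" "distinct [p, q, r, s]"
    "{p, q} \<in> E" "{r, s} \<in> E"
    by auto
  then have sub: "{p, q, r, s} \<subseteq> W" and "card {p, q, r, s} = 4" by auto
  then have "W = {p, q, r, s}"
    using assms card_mono[OF assms(1) sub] by (intro card_subset_eq[symmetric]) simp_all
  show ?thesis
  proof (rule matching_coverI[of E W "{{p, q}, {r, s}}" "{p, q}"])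
    show "matching_in E W {{p, q}, {r, s}}" "card {p, q} \<le> card {{p, q}, {r, s}}"
      using pqrs by (auto simp: matching_in_def pairwise_def disjnt_def doubleton_eq_iff)
  qed (use pqrs \<open>W = {p, q, r, s}\<close> in \<open>auto simp: doubleton_eq_iff\<close>)
next
  case False
  then show ?thesis by (intro matching_cover_if_edges_intersect) blast
qed

lemma matching_cover_pendant:
  assumes "finite W" "x \<in> W" "a \<in> W" "x \<noteq> a" "{x, a} \<in> E"
    and pendant: "\<forall>q\<in>W. q \<noteq> x \<longrightarrow> {x, q} \<in> E \<longrightarrow> q = a"
    and "matching_cover E (W - {x, a})"
  shows "matching_cover E W"
proof -
  obtain M C where M: "matching_in E (W - {x, a}) M" and C: "C \<subseteq> W - {x, a}" "card C \<le> card M"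
    and cover: "\<forall>p\<in>W - {x, a} - C. \<forall>q\<in>W - {x, a} - C. p \<noteq> q \<longrightarrow> {p, q} \<in> E \<longrightarrow> {p, q} \<in> M"
    using assms(7) unfolding matching_cover_def by blast
  have "finite M" "{x, a} \<notin> M"
    using M assms(1) unfolding matching_in_def by (auto intro: finite_subset[of M "Pow W"])
  show ?thesis
  proof (rule matching_coverI[of E W "insert {x, a} M" "insert a C"])
    show "matching_in E W (insert {x, a} M)"
      using M assms(2-5) unfolding matching_in_def
      by (auto simp: pairwise_insert disjnt_def)
    show "card (insert a C) \<le> card (insert {x, a} M)"
      using C \<open>finite M\<close> \<open>{x, a} \<notin> M\<close> finite_subset[OF C(1)] assms(1)
      by (simp add: card_insert_le_m1 le_SucI)
    show "\<forall>p\<in>W - insert a C. \<forall>q\<in>W - insert a C. p \<noteq> q \<longrightarrow> {p, q} \<in> E \<longrightarrow>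
            {p, q} \<in> insert {x, a} M"
    proof (intro ballI impI)
      fix p q assume p: "p \<in> W - insert a C" and q: "q \<in> W - insert a C" and "p \<noteq> q" "{p, q} \<in> E"
      then have "p \<noteq> x" "q \<noteq> x"
        using pendant by (metis DiffD1 DiffD2 insert_commute insertI1)+
      with p q \<open>p \<noteq> q\<close> \<open>{p, q} \<in> E\<close> show "{p, q} \<in> insert {x, a} M"
        using cover by blast
    qed
  qed (use C assms(3) in auto)
qed

lemma matching_cover_min_degree_1:
  assumes "finite W" "card W \<le> 6" "x \<in> W" "nbhd E x \<inter> W = {a}" "{x} \<notin> E"
  shows "matching_cover E W"
proof -
  have "a \<in> W" "x \<noteq> a" "{x, a} \<in> E" using assms(4,5) unfolding nbhd_def by auto
  then have "card (W - {x, a}) \<le> 4"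
    using assms(1,2,3) by (simp add: card_Diff_subset)
  then have "matching_cover E (W - {x, a})"
    using assms(1) by (intro matching_cover_card_le_4) auto
  moreover have "\<forall>q\<in>W. q \<noteq> x \<longrightarrow> {x, q} \<in> E \<longrightarrow> q = a"
    using assms(4) unfolding nbhd_def by auto
  ultimately show ?thesis
    by (intro matching_cover_pendant[OF assms(1,3) \<open>a \<in> W\<close> \<open>x \<noteq> a\<close> \<open>{x, a} \<in> E\<close>])
qed

lemma nbhd_eq_if_card_le:
  assumes "nbhd E w \<inter> W \<subseteq> S" "finite S" "card S \<le> card (nbhd E w \<inter> W)"
  shows "nbhd E w \<inter> W = S"
  using assms by (simp add: card_seteq)

lemma matching_in_edges_within:
  assumes "R \<subseteq> W" and at_most_one: "\<forall>y\<in>R. \<forall>z\<in>R. \<forall>c\<in>R. {y, z} \<in> E \<longrightarrow> {y, c} \<in> E \<longrightarrow> z = c"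
  shows "matching_in E W {e. e \<subseteq> R \<and> card e = 2 \<and> e \<in> E}"
proof -
  have "e = e'"
    if ee': "e \<subseteq> R" "card e = 2" "e \<in> E" "e' \<subseteq> R" "card e' = 2" "e' \<in> E" "y \<in> e" "y \<in> e'"
    for e e' y
  proof -
    obtain z where "e = {y, z}" using card_2_containing[of e y] ee' by blast
    moreover obtain c where "e' = {y, c}" using card_2_containing[of e' y] ee' by blast
    ultimately show ?thesis using at_most_one ee' by auto
  qed
  then show ?thesis
    unfolding matching_in_def pairwise_def disjnt_def using assms(1) by blast
qed

lemma nbhd_inter_eq_pair:
  assumes "nbhd E x \<inter> W = {a, b}" "{x} \<notin> E"
  shows "a \<in> W" "b \<in> W" "{x, a} \<in> E" "{x, b} \<in> E" "x \<noteq> a" "x \<noteq> b"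
proof -
  have "a \<in> nbhd E x" "b \<in> nbhd E x" "x \<notin> nbhd E x"
    using assms unfolding nbhd_def by auto
  then show "a \<in> W" "b \<in> W" "{x, a} \<in> E" "{x, b} \<in> E" "x \<noteq> a" "x \<noteq> b"
    using assms(1) unfolding nbhd_def by auto
qed

lemma matching_cover_min_degree_2_sparse:
  assumes "finite W" "x \<in> W" "nbhd E x \<inter> W = {a, b}" "a \<noteq> b" "R = W - {x, a, b}" "R \<noteq> {}"
    and loop_free: "\<forall>w\<in>W. {w} \<notin> E" and min_degree: "\<forall>w\<in>W. 2 \<le> card (nbhd E w \<inter> W)"
    and sparse: "\<forall>y\<in>R. \<forall>z\<in>R. \<forall>c\<in>R. {y, z} \<in> E \<longrightarrow> {y, c} \<in> E \<longrightarrow> z = c"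
  shows "matching_cover E W"
proof -
  have ab: "a \<in> W" "b \<in> W" "{x, a} \<in> E" "{x, b} \<in> E" "x \<noteq> a" "x \<noteq> b"
    using nbhd_inter_eq_pair[OF assms(3)] loop_free assms(2) by auto
  define ER where "ER = {e. e \<subseteq> R \<and> card e = 2 \<and> e \<in> E}"
  have "R \<subseteq> W" using assms(5) by blast
  then have "matching_in E W ER"
    unfolding ER_def using sparse by (rule matching_in_edges_within)
  have uncovered: "{u, w} \<in> ER"
    if uw: "u \<in> W - {a, b}" "w \<in> W - {a, b}" "u \<noteq> w" "{u, w} \<in> E" for u w
  proof -
    have "w \<notin> nbhd E x" "u \<notin> nbhd E x" using uw(1,2) assms(3) by auto
    then have "u \<noteq> x" "w \<noteq> x" using uw(4) unfolding nbhd_def by (auto simp: insert_commute)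
    then show ?thesis using uw unfolding ER_def assms(5) by auto
  qed
  show ?thesis
  proof (cases "ER = {}")
    case True
    obtain r where "r \<in> R" using assms(6) by blast
    have "w \<in> {a, b}" if w: "w \<in> nbhd E r \<inter> W" for w
    proof (rule ccontr)
      assume "w \<notin> {a, b}"
      have "r \<noteq> w" using w loop_free unfolding nbhd_def by auto
      then show False
        using uncovered[of r w] True \<open>r \<in> R\<close> assms(5) w \<open>w \<notin> {a, b}\<close> unfolding nbhd_def by auto
    qed
    moreover have "card {a, b} \<le> card (nbhd E r \<inter> W)"
      using min_degree \<open>r \<in> R\<close> assms(4,5) by auto
    ultimately have "nbhd E r \<inter> W = {a, b}"
      by (intro nbhd_eq_if_card_le) auto
    then have "{r, b} \<in> E" unfolding nbhd_def by blast
    show ?thesis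
    proof (rule matching_coverI[of E W "{{x, a}, {r, b}}" "{a, b}"])
      show "matching_in E W {{x, a}, {r, b}}" "card {a, b} \<le> card {{x, a}, {r, b}}"
        using ab \<open>r \<in> R\<close> \<open>{r, b} \<in> E\<close> assms(2,4,5)
        by (auto simp: matching_in_def pairwise_def disjnt_def doubleton_eq_iff)
    qed (use ab uncovered True in auto)
  next
    case False
    have "finite ER" "{x, a} \<notin> ER"
      using assms(1,5) unfolding ER_def by (auto intro: finite_subset[of _ "Pow W"])
    then have "card {a, b} \<le> card (insert {x, a} ER)"
      using False assms(4) by (simp add: card_gt_0_iff Suc_leI)
    moreover have "matching_in E W (insert {x, a} ER)"
    proof -
      have "\<forall>e\<in>ER. disjnt {x, a} e \<and> disjnt e {x, a}"
        using assms(5) unfolding ER_def disjnt_def by auto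
      then show ?thesis
        using \<open>matching_in E W ER\<close> ab assms(2) unfolding matching_in_def by (simp add: pairwise_insert)
    qed
    ultimately show ?thesis
      using ab uncovered by (intro matching_coverI) auto
  qed
qed

lemma matching_cover_min_degree_2_dense:
  assumes "distinct [x, a, b, y, z, c]" "W = {x, a, b, y, z, c}"
    and "{x, a} \<in> E" "{x, b} \<in> E" "{x, y} \<notin> E" "{x, z} \<notin> E" "{x, c} \<notin> E"
    and "{y, z} \<in> E" "{y, c} \<in> E" "{z} \<notin> E" "2 \<le> card (nbhd E z \<inter> W)"
  shows "matching_cover E W"
proof -
  have edge_into_nbhd: "matching_cover E W"
    if "W = {x, d, d', y, s, s'}" "distinct [x, d, d', y, s, s']"
      "{x, d'} \<in> E" "{y, s'} \<in> E" "{s, d} \<in> E" "{x, y} \<notin> E" "{x, s'} \<notin> E" for d d' s s'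
  proof (rule matching_coverI)
    show "matching_in E W {{x, d'}, {y, s'}, {s, d}}" "card {s, d, d'} \<le> card {{x, d'}, {y, s'}, {s, d}}"
      using that by (auto simp: matching_in_def pairwise_def disjnt_def doubleton_eq_iff)
  qed (use that in \<open>auto simp: insert_commute\<close>)
  show ?thesis
  proof (cases "{z, a} \<in> E \<or> {z, b} \<in> E \<or> {c, a} \<in> E \<or> {c, b} \<in> E")
    case True
    then show ?thesis
      using edge_into_nbhd[of a b z c] edge_into_nbhd[of b a z c] edge_into_nbhd[of a b c z] edge_into_nbhd[of b a c z] assms
      by (auto simp: insert_commute)
  next
    case False
    have "w \<in> {y, c}" if "w \<in> nbhd E z \<inter> W" for w
      using that assms False unfolding nbhd_def by (auto simp: insert_commute)
    then have "nbhd E z \<inter> W = {y, c}"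
      using assms(1,11) by (intro nbhd_eq_if_card_le) auto
    then have "{z, c} \<in> E" unfolding nbhd_def by blast
    show ?thesis
    proof (rule matching_coverI)
      show "matching_in E W {{x, b}, {z, c}}" "card {y, a} \<le> card {{x, b}, {z, c}}"
        using assms \<open>{z, c} \<in> E\<close> by (auto simp: matching_in_def pairwise_def disjnt_def doubleton_eq_iff)
    qed (use assms False \<open>{z, c} \<in> E\<close> in \<open>auto simp: insert_commute\<close>)
  qed
qed

lemma matching_cover_min_degree_2:
  assumes "finite W" "4 \<le> card W" "card W \<le> 6" "x \<in> W" "nbhd E x \<inter> W = {a, b}" "a \<noteq> b"
    and loop_free: "\<forall>w\<in>W. {w} \<notin> E" and min_degree: "\<forall>w\<in>W. 2 \<le> card (nbhd E w \<inter> W)"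
  shows "matching_cover E W"
proof -
  define R where "R = W - {x, a, b}"
  have "a \<in> W" "b \<in> W" "x \<noteq> a" "x \<noteq> b" "{x, a} \<in> E" "{x, b} \<in> E"
    using nbhd_inter_eq_pair[OF assms(5)] loop_free assms(4) by auto
  then have "{x, a, b} \<subseteq> W" "card {x, a, b} = 3"
    using assms(4,6) \<open>a \<in> W\<close> \<open>b \<in> W\<close> by auto
  then have card_R: "card R = card W - 3" unfolding R_def using assms(1) by (simp add: card_Diff_subset)
  show ?thesis
  proof (cases "\<exists>y\<in>R. \<exists>z\<in>R. \<exists>c\<in>R. z \<noteq> c \<and> {y, z} \<in> E \<and> {y, c} \<in> E")
    case False
    have "R \<noteq> {}" using card_R assms(2) by auto
    with False show ?thesis
      using matching_cover_min_degree_2_sparse[OF assms(1,4-6) R_def] loop_free min_degree by blast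
  next
    case True
    then obtain y z c where yzc: "y \<in> R" "z \<in> R" "c \<in> R" "z \<noteq> c" "{y, z} \<in> E" "{y, c} \<in> E" by blast
    then have "y \<noteq> z" "y \<noteq> c" using loop_free unfolding R_def by auto
    then have "{y, z, c} \<subseteq> R" "card {y, z, c} = 3" "finite R" "card R \<le> 3"
      using yzc card_R assms(1,3) unfolding R_def by auto
    then have "R = {y, z, c}"
      using card_mono[of R "{y, z, c}"] by (intro card_subset_eq[symmetric]) auto
    then have W: "W = {x, a, b, y, z, c}"
      using \<open>{x, a, b} \<subseteq> W\<close> unfolding R_def by auto
    have "{x, y} \<notin> E" "{x, z} \<notin> E" "{x, c} \<notin> E"
      using yzc assms(5) unfolding R_def nbhd_def by auto
    moreover have "{z} \<notin> E" "2 \<le> card (nbhd E z \<inter> W)"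
      using loop_free min_degree yzc unfolding R_def by auto
    moreover have "distinct [x, a, b, y, z, c]"
      using yzc \<open>y \<noteq> z\<close> \<open>y \<noteq> c\<close> \<open>x \<noteq> a\<close> \<open>x \<noteq> b\<close> assms(6) unfolding R_def by auto
    ultimately show ?thesis
      using yzc \<open>{x, a} \<in> E\<close> \<open>{x, b} \<in> E\<close> by (intro matching_cover_min_degree_2_dense[OF _ W]) auto
  qed
qed

lemma card_nbhd_le_Suc:
  assumes "finite D" "nbhd E w \<inter> W \<subseteq> insert u D"
  shows "card (nbhd E w \<inter> W) \<le> Suc (card (nbhd E w \<inter> D))"
proof -
  have "card (nbhd E w \<inter> W) \<le> card (insert u (nbhd E w \<inter> D))"
    using assms by (intro card_mono) auto
  also have "\<dots> \<le> Suc (card (nbhd E w \<inter> D))"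
    using assms(1) by (simp add: card_insert_if)
  finally show ?thesis .
qed

lemma matching_cover_perfect_matching:
  assumes "distinct [x, y, z, a, b, c]" "W = {x, y, z, a, b, c}"
    and "{x, y} \<notin> E" "{x, z} \<notin> E"
    and "{x, a} \<in> E" "{x, b} \<in> E" "{x, c} \<in> E" "{y, a} \<in> E" "{z, b} \<in> E"
  shows "matching_cover E W"
proof -
  have pm: "matching_in E W {{x, c}, {y, a}, {z, b}}" "card {{x, c}, {y, a}, {z, b}} = 3"
    using assms by (auto simp: matching_in_def pairwise_def disjnt_def doubleton_eq_iff)
  have edge_in_D: "matching_cover E W"
    if "W = {x, y, z, d1, d2, d3}" "distinct [x, y, z, d1, d2, d3]"
      "{x, d3} \<in> E" "{y, z} \<in> E" "{d1, d2} \<in> E" for d1 d2 d3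
  proof (rule matching_coverI)
    show "matching_in E W {{x, d3}, {y, z}, {d1, d2}}" "card {d1, d2, d3} \<le> card {{x, d3}, {y, z}, {d1, d2}}"
      using that by (auto simp: matching_in_def pairwise_def disjnt_def doubleton_eq_iff)
  qed (use assms(3,4) that in \<open>auto simp: insert_commute\<close>)
  show ?thesis
  proof (cases "{y, z} \<in> E")
    case False
    show ?thesis
      by (rule matching_coverI[OF pm(1), of "{a, b, c}"])
        (use assms False pm(2) in \<open>auto simp: insert_commute\<close>)
  next
    case True
    show ?thesis
    proof (cases "{a, b} \<in> E \<or> {a, c} \<in> E \<or> {b, c} \<in> E")
      case True
      then show ?thesis
        using edge_in_D[of a b c] edge_in_D[of a c b] edge_in_D[of b c a] assms \<open>{y, z} \<in> E\<close>
        by (auto simp: insert_commute)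
    next
      case False
      show ?thesis
        by (rule matching_coverI[OF pm(1), of "{x, y, z}"])
          (use assms False pm(2) in \<open>auto simp: insert_commute\<close>)
    qed
  qed
qed

lemma matching_cover_min_degree_3:
  assumes "finite W" "card W = 6" "x \<in> W" "card (nbhd E x \<inter> W) = 3"
    and loop_free: "\<forall>w\<in>W. {w} \<notin> E" and min_degree: "\<forall>w\<in>W. 3 \<le> card (nbhd E w \<inter> W)"
  shows "matching_cover E W"
proof -
  define D where "D = nbhd E x \<inter> W"
  have "x \<notin> D" using loop_free assms(3) unfolding D_def nbhd_def by auto
  then have "card (W - insert x D) = 2"
    using assms(1-4) unfolding D_def by (simp add: card_Diff_subset)
  then obtain y z where R: "W - insert x D = {y, z}" "y \<noteq> z" by (meson card_2_iff)
  have "{x, y} \<notin> E" "{x, z} \<notin> E" using R unfolding D_def nbhd_def by auto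
  have two_in_D: "2 \<le> card (nbhd E w \<inter> D)" if "w \<in> {y, z}" "u \<in> {y, z}" "u \<noteq> w" for w u
  proof -
    have "w \<in> W" "{x, w} \<notin> E" "{w} \<notin> E"
      using that R loop_free unfolding D_def nbhd_def by auto
    have "v \<in> insert u D" if "v \<in> nbhd E w \<inter> W" for v
    proof -
      have "v \<noteq> x" "v \<noteq> w"
        using that \<open>{x, w} \<notin> E\<close> \<open>{w} \<notin> E\<close> unfolding nbhd_def by (auto simp: insert_commute)
      then show ?thesis using that R \<open>w \<in> {y, z}\<close> \<open>u \<in> {y, z}\<close> \<open>u \<noteq> w\<close> by blast
    qed
    then have "card (nbhd E w \<inter> W) \<le> Suc (card (nbhd E w \<inter> D))"
      using assms(1) unfolding D_def by (intro card_nbhd_le_Suc) auto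
    then show ?thesis using min_degree \<open>w \<in> W\<close> by fastforce
  qed
  have "nbhd E y \<inter> D \<noteq> {}" using two_in_D[of y z] R(2) by auto
  then obtain a where "a \<in> D" "{y, a} \<in> E" unfolding nbhd_def by blast
  obtain b where "b \<in> D" "b \<noteq> a" "{z, b} \<in> E"
  proof -
    have "\<not> nbhd E z \<inter> D \<subseteq> {a}"
      using two_in_D[of z y] R(2) card_mono[of "{a}" "nbhd E z \<inter> D"] by fastforce
    then show thesis using that unfolding nbhd_def by blast
  qed
  obtain c where "D = {a, b, c}" "c \<noteq> a" "c \<noteq> b"
  proof -
    have "card (D - {a, b}) = 1"
      using assms(4) \<open>a \<in> D\<close> \<open>b \<in> D\<close> \<open>b \<noteq> a\<close> unfolding D_def by (simp add: card_Diff_subset)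
    then obtain c where "D - {a, b} = {c}" by (meson card_1_singletonE)
    then show thesis using that[of c] \<open>a \<in> D\<close> \<open>b \<in> D\<close> by auto
  qed
  have distinct: "distinct [x, y, z, a, b, c]"
    using R \<open>D = {a, b, c}\<close> \<open>x \<notin> D\<close> \<open>b \<noteq> a\<close> \<open>c \<noteq> a\<close> \<open>c \<noteq> b\<close> by auto
  have W: "W = {x, y, z, a, b, c}"
    using R \<open>D = {a, b, c}\<close> assms(3) unfolding D_def by auto
  have "{x, a} \<in> E" "{x, b} \<in> E" "{x, c} \<in> E"
    using \<open>D = {a, b, c}\<close> unfolding D_def nbhd_def by auto
  with \<open>{x, y} \<notin> E\<close> \<open>{x, z} \<notin> E\<close> \<open>{y, a} \<in> E\<close> \<open>{z, b} \<in> E\<close> show ?thesis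
    by (intro matching_cover_perfect_matching[OF distinct W])
qed

lemma matching_cover_if_two_non_neighbours:
  assumes "finite W" "card W \<le> 6" and loop_free: "\<forall>w\<in>W. {w} \<notin> E"
    and no_isolated: "\<forall>w\<in>W. \<exists>u\<in>W. {w, u} \<in> E"
    and "x \<in> W" "y \<in> W" "z \<in> W" "x \<noteq> y" "x \<noteq> z" "y \<noteq> z" "{x, y} \<notin> E" "{x, z} \<notin> E"
  shows "matching_cover E W"
proof -
  define deg where "deg w = card (nbhd E w \<inter> W)" for w
  obtain x0 where "x0 \<in> W" and min: "\<forall>w. w \<in> W \<longrightarrow> deg x0 \<le> deg w"
    using ex_has_least_nat[of "\<lambda>w. w \<in> W" x deg] assms(5) by blast
  define D where "D = nbhd E x0 \<inter> W"
  have "finite D" using assms(1) unfolding D_def by simp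
  have "D \<noteq> {}" using no_isolated \<open>x0 \<in> W\<close> unfolding D_def nbhd_def by auto
  have "nbhd E x \<inter> W \<subseteq> W - {x, y, z}"
    using loop_free assms(5,11,12) unfolding nbhd_def by auto
  then have "deg x \<le> card (W - {x, y, z})"
    using assms(1) unfolding deg_def by (intro card_mono) auto
  then have "deg x \<le> card W - 3"
    using assms(5-10) by (simp add: card_Diff_subset)
  then have "card D \<le> card W - 3" using min assms(5) unfolding deg_def D_def by fastforce
  moreover have "card D \<noteq> 0" using \<open>D \<noteq> {}\<close> \<open>finite D\<close> by simp
  ultimately have "card D = 1 \<or> card D = 2 \<or> card D = 3" using assms(2) by arith
  then consider "card D = 1" | "card D = 2" | "card D = 3" by blast
  then show ?thesis
  proof cases
    case 1
    then obtain a where "D = {a}" by (rule card_1_singletonE)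
    then show ?thesis
      using assms(1,2) \<open>x0 \<in> W\<close> loop_free unfolding D_def by (intro matching_cover_min_degree_1) auto
  next
    case 2
    then obtain a b where "D = {a, b}" "a \<noteq> b" by (meson card_2_iff)
    then show ?thesis
      using assms(1,2) \<open>x0 \<in> W\<close> \<open>card D \<le> card W - 3\<close> 2 loop_free min
      unfolding D_def deg_def by (intro matching_cover_min_degree_2) auto
  next
    case 3
    then show ?thesis
      using assms(1,2) \<open>x0 \<in> W\<close> \<open>card D \<le> card W - 3\<close> loop_free min
      unfolding D_def deg_def by (intro matching_cover_min_degree_3) auto
  qed
qed

lemma component_in_subset:
  assumes "x \<in> W"
  shows "component_in E W x \<subseteq> W"
proof
  fix y assume "y \<in> component_in E W x"
  then have "(adj_in E W)\<^sup>*\<^sup>* x y" unfolding component_in_def by simp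
  then show "y \<in> W" using assms by (induction rule: rtranclp_induct) (auto simp: adj_in_def)
qed

lemma robust_nbhd_card:
  assumes "simple_graph V E" "robust V E" "u \<in> V" "w \<in> nbhd E u"
  shows "5 \<le> card (nbhd E u)"
proof -
  have "finite (nbhd E u)" using finite_nbhd[OF assms(1)] .
  moreover have "5 \<le> card (component_in E (nbhd E u) w)"
    using assms(2-4) unfolding robust_def by blast
  ultimately show ?thesis
    using component_in_subset[OF assms(4)] by (meson card_mono le_trans)
qed

lemma robust_nbhd_no_isolated:
  assumes "robust V E" "u \<in> V" "w \<in> nbhd E u"
  shows "\<exists>w'\<in>nbhd E u. {w, w'} \<in> E"
proof -
  have "5 \<le> card (component_in E (nbhd E u) w)"
    using assms unfolding robust_def by blast
  then have "component_in E (nbhd E u) w \<noteq> {w}" by auto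
  moreover have "w \<in> component_in E (nbhd E u) w" unfolding component_in_def by simp
  ultimately obtain y where "(adj_in E (nbhd E u))\<^sup>*\<^sup>* w y" "y \<noteq> w"
    unfolding component_in_def by blast
  then obtain w' where "adj_in E (nbhd E u) w w'"
    by (metis converse_rtranclpE)
  then show ?thesis unfolding adj_in_def by blast
qed

section \<open>Vertices of degree at most six\<close>

lemma reducible_if_two_non_neighbours:
  assumes sg: "simple_graph V E" and "robust V E" "v \<in> V" "degree E v \<le> 6"
    and "x \<in> nbhd E v" "y \<in> nbhd E v" "z \<in> nbhd E v" "x \<noteq> y" "x \<noteq> z" "y \<noteq> z"
    and "{x, y} \<notin> E" "{x, z} \<notin> E"
  shows "reducible V E {v}"
proof (rule reducible_if_matching_cover[OF sg \<open>v \<in> V\<close>])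
  have "finite (nbhd E v)" using finite_nbhd[OF sg] .
  moreover have "card (nbhd E v) \<le> 6" using assms(4) unfolding degree_def .
  moreover have "\<forall>w\<in>nbhd E v. {w} \<notin> E" using simple_graph_no_loop[OF sg] by blast
  moreover have "\<forall>w\<in>nbhd E v. \<exists>u\<in>nbhd E v. {w, u} \<in> E"
    using robust_nbhd_no_isolated[OF assms(2,3)] by blast
  ultimately show "matching_cover E (nbhd E v)"
    by (rule matching_cover_if_two_non_neighbours[where x = x and y = y and z = z])
      (use assms(5-12) in auto)
qed

lemma reducible_if_two_disjoint_non_edges:
  assumes sg: "simple_graph V E" and "v \<in> V" "5 \<le> card (nbhd E v)" "card (nbhd E v) \<le> 6"
    and abcd: "a \<in> nbhd E v" "b \<in> nbhd E v" "c \<in> nbhd E v" "d \<in> nbhd E v" "distinct [a, b, c, d]"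
    and non_edges: "{a, b} \<notin> E" "{c, d} \<notin> E"
    and only: "\<forall>p\<in>nbhd E v. \<forall>q\<in>nbhd E v. p \<noteq> q \<longrightarrow> {p, q} \<notin> E \<longrightarrow> {p, q} = {a, b} \<or> {p, q} = {c, d}"
  shows "reducible V E {v}"
proof -
  define N where "N = nbhd E v"
  have "finite N" using finite_nbhd[OF sg] unfolding N_def .
  have edge: "{p, q} \<in> E" if "p \<in> N" "q \<in> N" "p \<noteq> q" "{p, q} \<noteq> {a, b}" "{p, q} \<noteq> {c, d}" for p q
    using only that unfolding N_def by blast
  have "{a, b, c, d} \<subseteq> N" "card {a, b, c, d} = 4" using abcd unfolding N_def by auto
  then have "card (N - {a, b, c, d}) \<noteq> 0"
    using assms(3) \<open>finite N\<close> unfolding N_def by (simp add: card_Diff_subset)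
  then obtain e where "e \<in> N" "e \<notin> {a, b, c, d}" by (metis DiffE card.empty ex_in_conv)
  then have distinct: "distinct [a, b, c, d, e]" and sub: "{a, b, c, d, e} \<subseteq> N"
    using abcd(5) \<open>{a, b, c, d} \<subseteq> N\<close> by auto
  have "{a, c} \<in> E" "{c, e} \<in> E" "{a, e} \<in> E" "{b, d} \<in> E" "{d, e} \<in> E" "{b, e} \<in> E"
    and "{b, c} \<in> E" "{a, d} \<in> E"
    using edge[of a c] edge[of c e] edge[of a e] edge[of b d] edge[of d e] edge[of b e]
      edge[of b c] edge[of a d] sub distinct by (auto simp: doubleton_eq_iff)
  note two_triangles = reducible_if_two_triangles_cover[OF sg \<open>v \<in> V\<close> distinct sub[unfolded N_def]
      this(1-6) non_edges]
  have "card (N - {a, b, c, d, e}) \<le> 1"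
    using sub distinct assms(4) \<open>finite N\<close> unfolding N_def by (simp add: card_Diff_subset)
  then consider "N - {a, b, c, d, e} = {}" | f where "N - {a, b, c, d, e} = {f}"
    by (metis card_0_eq card_1_singletonE finite_Diff \<open>finite N\<close> le_Suc_eq One_nat_def le_zero_eq)
  then show ?thesis
  proof cases
    case 1
    show ?thesis
    proof (rule two_triangles[of "{{b, c}, {a, d}}" "{}"])
      show "matching_in E (nbhd E v) {{b, c}, {a, d}}"
        using sub distinct \<open>{b, c} \<in> E\<close> \<open>{a, d} \<in> E\<close> unfolding N_def
        by (auto simp: matching_in_def pairwise_def disjnt_def)
    qed (use distinct 1 in \<open>auto simp: N_def doubleton_eq_iff\<close>)
  next
    case 2
    then have "f \<in> N" "f \<notin> {a, b, c, d, e}" by auto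
    then have "{e, f} \<in> E" using edge[of e f] \<open>e \<in> N\<close> distinct by (auto simp: doubleton_eq_iff)
    show ?thesis
    proof (rule two_triangles[of "{{b, c}, {a, d}, {e, f}}" "{f}"])
      show "matching_in E (nbhd E v) {{b, c}, {a, d}, {e, f}}"
        using sub distinct \<open>f \<in> N\<close> \<open>f \<notin> {a, b, c, d, e}\<close> \<open>{b, c} \<in> E\<close> \<open>{a, d} \<in> E\<close> \<open>{e, f} \<in> E\<close>
        unfolding N_def by (auto simp: matching_in_def pairwise_def disjnt_def)
    qed (use distinct 2 \<open>f \<notin> {a, b, c, d, e}\<close> in \<open>auto simp: N_def doubleton_eq_iff\<close>)
  qed
qed

lemma compl_edges_iff:
  "{p, q} \<in> compl_edges E W \<longleftrightarrow> p \<in> W \<and> q \<in> W \<and> p \<noteq> q \<and> {p, q} \<notin> E"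
  unfolding compl_edges_def by (auto simp: doubleton_eq_iff insert_commute)

lemma reducible_if_compl_max_degree_gt_1:
  assumes "simple_graph V E" "robust V E" "v \<in> V" "degree E v \<le> 6"
    and "max_degree (nbhd E v) (compl_edges E (nbhd E v)) > 1"
  shows "reducible V E {v}"
proof -
  define N where "N = nbhd E v"
  define F where "F = compl_edges E N"
  have "finite N" using finite_nbhd[OF assms(1)] unfolding N_def .
  define deg where "deg x = card (nbhd F x \<inter> N)" for x
  have "N \<noteq> {}" "1 < Max (deg ` N)"
    using assms(5) unfolding max_degree_def N_def F_def deg_def by (auto split: if_splits)
  moreover have "Max (deg ` N) \<in> deg ` N"
    using \<open>finite N\<close> \<open>N \<noteq> {}\<close> by (intro Max_in) auto
  ultimately obtain x where "x \<in> N" "1 < card (nbhd F x \<inter> N)"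
    unfolding deg_def by auto
  then obtain y z where "y \<in> nbhd F x \<inter> N" "z \<in> nbhd F x \<inter> N" "y \<noteq> z"
    using \<open>finite N\<close> card_le_Suc0_iff_eq[of "nbhd F x \<inter> N"] by auto
  then have "{x, y} \<in> F" "{x, z} \<in> F" "y \<in> N" "z \<in> N" unfolding nbhd_def by auto
  then have "x \<noteq> y" "x \<noteq> z" "{x, y} \<notin> E" "{x, z} \<notin> E" unfolding F_def compl_edges_iff by auto
  then show ?thesis
    using reducible_if_two_non_neighbours[OF assms(1-4), of x y z] \<open>x \<in> N\<close> \<open>y \<in> N\<close> \<open>z \<in> N\<close> \<open>y \<noteq> z\<close>
    unfolding N_def by blast
qed

lemma reducible_if_compl_two_edges:
  assumes "simple_graph V E" "robust V E" "v \<in> V" "degree E v \<le> 6"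
    and "card (compl_edges E (nbhd E v)) = 2"
  shows "reducible V E {v}"
proof -
  define N where "N = nbhd E v"
  obtain e1 e2 where F: "compl_edges E N = {e1, e2}" "e1 \<noteq> e2"
    using assms(5) unfolding N_def by (meson card_2_iff)
  have "e1 \<in> compl_edges E N" "e2 \<in> compl_edges E N" using F(1) by auto
  then obtain a b c d where "e1 = {a, b}" and ab: "a \<in> N" "b \<in> N" "a \<noteq> b" "{a, b} \<notin> E"
    and "e2 = {c, d}" and cd: "c \<in> N" "d \<in> N" "c \<noteq> d" "{c, d} \<notin> E"
    unfolding compl_edges_def mem_Collect_eq by metis
  show ?thesis
  proof (cases "{a, b} \<inter> {c, d} = {}")
    case True
    have "\<forall>p\<in>N. \<forall>q\<in>N. p \<noteq> q \<longrightarrow> {p, q} \<notin> E \<longrightarrow> {p, q} = {a, b} \<or> {p, q} = {c, d}"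
    proof (intro ballI impI)
      fix p q assume "p \<in> N" "q \<in> N" "p \<noteq> q" "{p, q} \<notin> E"
      then have "{p, q} \<in> compl_edges E N" by (simp add: compl_edges_iff)
      then show "{p, q} = {a, b} \<or> {p, q} = {c, d}"
        using F(1) \<open>e1 = {a, b}\<close> \<open>e2 = {c, d}\<close> by simp
    qed
    moreover have "5 \<le> card N" "card N \<le> 6"
      using robust_nbhd_card assms(1-4) ab unfolding N_def degree_def by auto
    ultimately show ?thesis
      using assms(1,3) ab cd True unfolding N_def
      by (intro reducible_if_two_disjoint_non_edges) auto
  next
    case False
    then obtain x y z where xy: "{x, y} = {a, b}" and xz: "{x, z} = {c, d}"
      by (auto simp: insert_commute)
    have "x \<in> {a, b}" "y \<in> {a, b}" "z \<in> {c, d}" by (simp_all flip: xy xz)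
    moreover have "x \<noteq> y" "x \<noteq> z" using ab(3) cd(3) xy xz by auto
    moreover have "y \<noteq> z" using F(2) \<open>e1 = {a, b}\<close> \<open>e2 = {c, d}\<close> xy xz by auto
    moreover have "{x, y} \<notin> E" "{x, z} \<notin> E" using ab(4) cd(4) xy xz by simp_all
    ultimately show ?thesis
      using reducible_if_two_non_neighbours[OF assms(1-4), of x y z] ab cd unfolding N_def by blast
  qed
qed

theorem proposition5p1:
  fixes V :: "'a set" and E :: "'a set set" and v :: 'a
  assumes "simple_graph V E" and "robust V E" and "v \<in> V" and "degree E v \<le> 6"
  shows "(max_degree (nbhd E v) (compl_edges E (nbhd E v)) > 1 \<longrightarrow> reducible V E {v})
       \<and> (card (compl_edges E (nbhd E v)) = 2 \<longrightarrow> reducible V E {v})"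
  using reducible_if_compl_max_degree_gt_1[OF assms] reducible_if_compl_two_edges[OF assms] by blast

end
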